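(* Consider the network of weakly, diffusively coupled scalar nodes \[ \dot x_i = a_ix_i^3(1-x_i)+\varepsilon\sum_{j=1}^N w_{ij}(x_j-x_i),\qquad i=1,\ldots,N, \] where $\varepsilon>0$, $a_i\neq 0$, $w_{ij}\in\mathbb{R}$, $w_{ii}=0$ for all $i$, and initial conditions satisfy $x_i(0)\in(0,1)$. If $a_i<0$ and $w_{ij}\geq 0$ for all $i,j=1,\ldots,N$, and the underlying digraph is strongly connected, then the origin (which is a nilpotent equilibrium for $\varepsilon=0$) is locally asymptotically stable for $\varepsilon>0$ sufficiently small.
   Context: The underlying digraph of the system has vertex set $\{1,\dots,N\}$ and a directed edge between $j$ and $i$ whenever $w_{ij}\neq0$; it is strongly connected if every vertex can be reached from every other vertex by a directed path. An equilibrium is nilpotent if all eigenvalues of the Jacobian there are zero. *)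

theory Defs
  imports "HOL-Analysis.Analysis"
begin

definition node_field :: "real^'n \<Rightarrow> real^'n^'n \<Rightarrow> real \<Rightarrow> real^'n \<Rightarrow> real^'n" where
  "node_field a w \<epsilon> x =
     (\<chi> i. a$i * (x$i)^3 * (1 - x$i) + \<epsilon> * (\<Sum>j\<in>UNIV. w$i$j * (x$j - x$i)))"

definition digraph_edges :: "real^'n^'n \<Rightarrow> ('n \<times> 'n) set" where
  "digraph_edges w = {(j, i). w$i$j \<noteq> 0}"

definition strongly_connected :: "real^'n^'n \<Rightarrow> bool" where
  "strongly_connected w \<longleftrightarrow> (\<forall>u v. (u, v) \<in> (digraph_edges w)\<^sup>*)"

text \<open>x solves x' = f(x) on the interval T (one-sided derivatives at endpoints).\<close>
definition solves_on :: "('a::real_normed_vector \<Rightarrow> 'a) \<Rightarrow> (real \<Rightarrow> 'a) \<Rightarrow> real set \<Rightarrow> bool" where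
  "solves_on f x T \<longleftrightarrow> (\<forall>t\<in>T. (x has_vector_derivative f (x t)) (at t within T))"

text \<open>Lyapunov stability: solutions from nearby initial data exist for all forward time,
  and every (possibly only locally defined) forward solution stays close.\<close>
definition lyapunov_stable :: "('a::real_normed_vector \<Rightarrow> 'a) \<Rightarrow> 'a \<Rightarrow> bool" where
  "lyapunov_stable f x0 \<longleftrightarrow>
     (\<forall>e>0. \<exists>d>0. \<forall>y. norm (y - x0) < d \<longrightarrow>
        (\<exists>x. x 0 = y \<and> solves_on f x {0..}) \<and>
        (\<forall>x b. x 0 = y \<and> solves_on f x {0..<b} \<longrightarrow> (\<forall>t\<in>{0..<b}. norm (x t - x0) < e)))"

definition attractive :: "('a::real_normed_vector \<Rightarrow> 'a) \<Rightarrow> 'a \<Rightarrow> bool" where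
  "attractive f x0 \<longleftrightarrow>
     (\<exists>d>0. \<forall>x. solves_on f x {0..} \<and> norm (x 0 - x0) < d \<longrightarrow> (x \<longlongrightarrow> x0) at_top)"

definition locally_asymptotically_stable :: "('a::real_normed_vector \<Rightarrow> 'a) \<Rightarrow> 'a \<Rightarrow> bool" where
  "locally_asymptotically_stable f x0 \<longleftrightarrow> f x0 = 0 \<and> lyapunov_stable f x0 \<and> attractive f x0"

end

theory Submission
  imports Defs "HOL-Real_Asymp.Real_Asymp"
begin

text \<open>Write \<open>\<parallel>z\<parallel>\<^sub>\<infinity>\<close> for the maximum norm. If every \<open>a\<^sub>i \<le> -c < 0\<close> and the weights are
  nonnegative, then at a point with \<open>\<bar>z\<^sub>i\<bar> = \<parallel>z\<parallel>\<^sub>\<infinity> = r \<le> 1/2\<close> the diffusive coupling pulls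
  \<open>z\<^sub>i\<close> towards the other components, hence towards the origin, and the cubic term does so at
  rate at least \<open>(c/2) r\<^sup>3\<close>. Comparing \<open>\<parallel>x(t)\<parallel>\<^sub>\<infinity>\<close> at its first touching time with the solution
  \<open>A / sqrt (1 + k A\<^sup>2 t)\<close> of \<open>r' = -(k/2) r\<^sup>3\<close> shows that solutions starting in the cube of
  radius \<open>A \<le> 1/2\<close> stay below this radius, which tends to \<open>0\<close>. This gives stability and
  attractivity for every \<open>\<epsilon> \<ge> 0\<close>. Global existence of solutions follows from Picard iteration
  for the field retracted onto the cube.\<close>

section \<open>Global solutions of bounded Lipschitz fields\<close>

lemma solves_on_subset: "solves_on f x T \<Longrightarrow> S \<subseteq> T \<Longrightarrow> solves_on f x S"
  unfolding solves_on_def by (meson has_vector_derivative_within_subset subsetD)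

lemma solves_on_continuous_on: "solves_on f x T \<Longrightarrow> continuous_on T x"
  unfolding solves_on_def continuous_on_eq_continuous_within
  using has_vector_derivative_continuous by blast

lemma has_integral_power_from_0:
  fixes t :: real
  assumes "0 \<le> t"
  shows "((\<lambda>s. s ^ n) has_integral t ^ Suc n / Suc n) {0..t}"
proof -
  have "((\<lambda>s. s ^ n) has_integral t ^ Suc n / Suc n - 0 ^ Suc n / Suc n) {0..t}"
  proof (rule fundamental_theorem_of_calculus)
    fix s :: real
    have "((\<lambda>s. s ^ Suc n) has_real_derivative Suc n * s ^ (Suc n - Suc 0)) (at s within {0..t})"
      by (rule DERIV_pow)
    then have "((\<lambda>s. s ^ Suc n / Suc n) has_real_derivative Suc n * s ^ n / Suc n)
        (at s within {0..t})"
      unfolding diff_Suc_Suc diff_zero by (rule DERIV_cdivide)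
    then have "((\<lambda>s. s ^ Suc n / Suc n) has_real_derivative s ^ n) (at s within {0..t})"
      by (simp del: of_nat_Suc)
    then show "((\<lambda>s. s ^ Suc n / Suc n) has_vector_derivative s ^ n) (at s within {0..t})"
      by (simp add: has_real_derivative_iff_has_vector_derivative)
  qed (use assms in auto)
  then show ?thesis by simp
qed

primrec picard_iter :: "('a::euclidean_space \<Rightarrow> 'a) \<Rightarrow> 'a \<Rightarrow> nat \<Rightarrow> real \<Rightarrow> 'a" where
  "picard_iter G y 0 = (\<lambda>t. y)"
| "picard_iter G y (Suc k) = (\<lambda>t. y + integral {0..t} (\<lambda>s. G (picard_iter G y k s)))"

definition picard_limit :: "('a::euclidean_space \<Rightarrow> 'a) \<Rightarrow> 'a \<Rightarrow> real \<Rightarrow> 'a" where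
  "picard_limit G y t = lim (\<lambda>k. picard_iter G y k t)"

locale bounded_lipschitz_field =
  fixes G :: "'a::euclidean_space \<Rightarrow> 'a" and M L :: real
  assumes norm_le_bound: "\<And>z. norm (G z) \<le> M"
    and lipschitz: "L-lipschitz_on UNIV G"
begin

lemma bound_nonneg: "0 \<le> M"
  using norm_le_bound[of 0] norm_ge_zero order_trans by blast

lemma lipschitz_nonneg: "0 \<le> L"
  using lipschitz by (rule lipschitz_on_nonneg)

lemma norm_diff_le: "norm (G u - G v) \<le> L * norm (u - v)"
  using lipschitz_onD[OF lipschitz] by (simp add: dist_norm)

lemma continuous_on_UNIV: "continuous_on UNIV G"
  using lipschitz by (rule lipschitz_on_continuous_on)

lemma picard_iter_continuous_on: "continuous_on {0..T} (picard_iter G y k)"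
proof (induction k)
  case (Suc k)
  have "continuous_on {0..T} (\<lambda>s. G (picard_iter G y k s))"
    using continuous_on_compose2[OF continuous_on_UNIV Suc.IH] by simp
  then have "(\<lambda>s. G (picard_iter G y k s)) integrable_on {0..T}"
    by (rule integrable_continuous_interval)
  then show ?case
    unfolding picard_iter.simps
    by (intro continuous_on_add continuous_on_const indefinite_integral_continuous_1)
qed simp

lemma picard_iter_integrable: "(\<lambda>s. G (picard_iter G y k s)) integrable_on {0..T}"
  using continuous_on_compose2[OF continuous_on_UNIV picard_iter_continuous_on]
  by (auto intro: integrable_continuous_interval)

lemma picard_iter_Suc_dist_le:
  assumes "0 \<le> t"
  shows "norm (picard_iter G y (Suc k) t - picard_iter G y k t)
           \<le> M * L ^ k * t ^ Suc k / fact (Suc k)"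
  using assms
proof (induction k arbitrary: t)
  case 0
  have "norm (integral {0..t} (\<lambda>s. G y)) \<le> integral {0..t} (\<lambda>s. M)"
    by (rule Henstock_Kurzweil_Integration.integral_norm_bound_integral) (use norm_le_bound in auto)
  then show ?case using 0 by (simp add: mult.commute)
next
  case (Suc k)
  let ?X = "picard_iter G y"
  define C where "C = L * M * L ^ k / fact (Suc k)"
  have "?X (Suc (Suc k)) t - ?X (Suc k) t
      = integral {0..t} (\<lambda>s. G (?X (Suc k) s)) - integral {0..t} (\<lambda>s. G (?X k s))"
    by (simp only: picard_iter.simps add_diff_cancel_left)
  also have "\<dots> = integral {0..t} (\<lambda>s. G (?X (Suc k) s) - G (?X k s))"
    by (rule integral_diff[symmetric]) (rule picard_iter_integrable)+
  also have "norm \<dots> \<le> integral {0..t} (\<lambda>s. C * s ^ Suc k)"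
  proof (rule Henstock_Kurzweil_Integration.integral_norm_bound_integral)
    show "(\<lambda>s. G (?X (Suc k) s) - G (?X k s)) integrable_on {0..t}"
      by (intro integrable_diff picard_iter_integrable)
    show "(\<lambda>s. C * s ^ Suc k) integrable_on {0..t}"
      by (intro integrable_continuous_interval continuous_intros)
    fix s assume s: "s \<in> {0..t}"
    have "norm (G (?X (Suc k) s) - G (?X k s)) \<le> L * norm (?X (Suc k) s - ?X k s)"
      by (rule norm_diff_le)
    also have "\<dots> \<le> L * (M * L ^ k * s ^ Suc k / fact (Suc k))"
      using Suc.IH[of s] s lipschitz_nonneg by (intro mult_left_mono) auto
    finally show "norm (G (?X (Suc k) s) - G (?X k s)) \<le> C * s ^ Suc k"
      by (simp add: C_def)
  qed
  also have "\<dots> = C * (t ^ Suc (Suc k) / Suc (Suc k))"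
    using has_integral_mult_right[OF has_integral_power_from_0[OF Suc.prems]]
    by (rule integral_unique)
  also have "\<dots> = M * L ^ Suc k * t ^ Suc (Suc k) / fact (Suc (Suc k))"
    by (simp add: C_def field_simps del: of_nat_Suc fact_Suc) (simp add: fact_Suc algebra_simps)
  finally show ?case .
qed

lemma picard_iter_tendsto:
  assumes t: "0 \<le> t"
  shows "(\<lambda>k. picard_iter G y k t) \<longlonglongrightarrow> picard_limit G y t"
proof -
  let ?d = "\<lambda>k. picard_iter G y (Suc k) t - picard_iter G y k t"
  have "summable (\<lambda>k. (M * t) * (inverse (fact k) * (L * t) ^ k))"
    by (intro summable_mult summable_exp)
  then have "summable (\<lambda>k. norm (?d k))"
  proof (rule summable_comparison_test[rotated], intro exI allI impI)
    fix k :: nat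
    have "fact k \<le> (fact (Suc k) :: real)"
      by (rule fact_mono) simp
    have "norm (?d k) \<le> M * L ^ k * t ^ Suc k / fact (Suc k)"
      by (rule picard_iter_Suc_dist_le[OF t])
    also have "\<dots> \<le> M * L ^ k * t ^ Suc k / fact k"
      using \<open>fact k \<le> fact (Suc k)\<close> bound_nonneg lipschitz_nonneg t by (intro divide_left_mono) auto
    also have "\<dots> = (M * t) * (inverse (fact k) * (L * t) ^ k)"
      by (simp add: field_simps power_mult_distrib)
    finally show "norm (norm (?d k)) \<le> (M * t) * (inverse (fact k) * (L * t) ^ k)"
      unfolding real_norm_def abs_norm_cancel .
  qed
  then have "(\<lambda>n. \<Sum>k<n. ?d k) \<longlonglongrightarrow> (\<Sum>k. ?d k)"
    by (rule summable_LIMSEQ[OF summable_norm_cancel])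
  then have "(\<lambda>n. (picard_iter G y n t - y) + y) \<longlonglongrightarrow> (\<Sum>k. ?d k) + y"
    by (intro tendsto_add tendsto_const)
      (simp only: sum_lessThan_telescope[of "\<lambda>k. picard_iter G y k t"] picard_iter.simps(1))
  then have "convergent (\<lambda>k. picard_iter G y k t)"
    unfolding convergent_def by auto
  then show ?thesis
    by (simp add: picard_limit_def convergent_LIMSEQ_iff)
qed

lemma picard_iter_dist_le:
  assumes "0 \<le> s" "s \<le> t"
  shows "norm (picard_iter G y k t - picard_iter G y k s) \<le> M * (t - s)"
proof (cases k)
  case 0
  then show ?thesis using bound_nonneg assms by simp
next
  case (Suc j)
  let ?g = "\<lambda>u. G (picard_iter G y j u)"
  have "integral {0..s} ?g + integral {s..t} ?g = integral {0..t} ?g"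
    by (rule Henstock_Kurzweil_Integration.integral_combine[OF assms picard_iter_integrable])
  then have "picard_iter G y k t - picard_iter G y k s = integral {s..t} ?g"
    using Suc by (simp add: algebra_simps)
  also have "norm \<dots> \<le> integral {s..t} (\<lambda>u. M)"
    by (rule Henstock_Kurzweil_Integration.integral_norm_bound_integral)
      (use norm_le_bound integrable_on_subinterval[OF picard_iter_integrable[of y j t]] assms
        in auto)
  finally show ?thesis
    using assms by (simp add: mult.commute)
qed

lemma picard_limit_lipschitz: "M-lipschitz_on {0..} (picard_limit G y)"
proof (rule lipschitz_onI)
  have le: "dist (picard_limit G y t) (picard_limit G y s) \<le> M * (t - s)" if "0 \<le> s" "s \<le> t" for s t
  proof -
    have "(\<lambda>k. norm (picard_iter G y k t - picard_iter G y k s))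
        \<longlonglongrightarrow> dist (picard_limit G y t) (picard_limit G y s)"
      using that by (auto simp: dist_norm intro!: tendsto_intros picard_iter_tendsto)
    then show ?thesis
      by (rule tendsto_upperbound) (use picard_iter_dist_le[OF that] in auto)
  qed
  fix s t :: real assume "s \<in> {0..}" "t \<in> {0..}"
  then show "dist (picard_limit G y s) (picard_limit G y t) \<le> M * dist s t"
    using le[of s t] le[of t s] by (cases "s \<le> t") (auto simp: dist_commute dist_real_def)
qed (rule bound_nonneg)

lemma picard_limit_integral_eq:
  assumes t: "0 \<le> t"
  shows "picard_limit G y t = y + integral {0..t} (\<lambda>s. G (picard_limit G y s))"
proof -
  have "(\<lambda>k. integral {0..t} (\<lambda>s. G (picard_iter G y k s)))
      \<longlonglongrightarrow> integral {0..t} (\<lambda>s. G (picard_limit G y s))"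
  proof (rule dominated_convergence(2))
    show "(\<lambda>k. G (picard_iter G y k s)) \<longlonglongrightarrow> G (picard_limit G y s)" if "s \<in> {0..t}" for s
      using that continuous_on_UNIV
      by (intro isCont_tendsto_compose[OF _ picard_iter_tendsto])
        (auto simp: continuous_on_eq_continuous_at)
    show "(\<lambda>s. G (picard_iter G y k s)) integrable_on {0..t}" for k
      by (rule picard_iter_integrable)
    show "norm (G (picard_iter G y k s)) \<le> M" for k s
      by (rule norm_le_bound)
  qed (rule integrable_const_ivl)
  then have "(\<lambda>k. picard_iter G y (Suc k) t) \<longlonglongrightarrow> y + integral {0..t} (\<lambda>s. G (picard_limit G y s))"
    by (simp add: tendsto_add_const_iff)
  then show ?thesis
    using LIMSEQ_Suc[OF picard_iter_tendsto[OF t]] LIMSEQ_unique by blast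
qed

lemma picard_limit_0: "picard_limit G y 0 = y"
  using picard_limit_integral_eq[of 0] by simp

lemma picard_limit_solves: "solves_on G (picard_limit G y) {0..}"
  unfolding solves_on_def
proof
  fix t :: real assume t: "t \<in> {0..}"
  let ?Z = "picard_limit G y"
  have "continuous_on {0..} (\<lambda>s. G (?Z s))"
    using continuous_on_compose2[OF continuous_on_UNIV
        lipschitz_on_continuous_on[OF picard_limit_lipschitz]]
    by simp
  then have "continuous_on {0..t+1} (\<lambda>s. G (?Z s))"
    by (rule continuous_on_subset) auto
  then have "((\<lambda>u. integral {0..u} (\<lambda>s. G (?Z s))) has_vector_derivative G (?Z t))
      (at t within {0..t+1})"
    by (rule integral_has_vector_derivative) (use t in auto)
  moreover have "at t within {0..t+1} = at t within {0..}"
    by (rule at_within_nhd[where S="{t - 1 <..< t + 1}"]) auto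
  ultimately have "((\<lambda>u. y + integral {0..u} (\<lambda>s. G (?Z s))) has_vector_derivative G (?Z t))
      (at t within {0..})"
    by (intro derivative_eq_intros) auto
  then show "(?Z has_vector_derivative G (?Z t)) (at t within {0..})"
    by (rule has_vector_derivative_transform[OF t, rotated]) (use picard_limit_integral_eq in auto)
qed

end

section \<open>Comparison with a decaying cube\<close>

lemma first_zero_crossing:
  fixes g :: "real \<Rightarrow> real"
  assumes cont: "continuous_on {0..T} g" and "0 \<le> T" and neg: "g 0 < 0" and "0 \<le> g T"
  obtains t where "0 < t" "t \<le> T" "g t = 0" "\<And>s. s \<in> {0..<t} \<Longrightarrow> g s < 0"
proof -
  define S where "S = {0..T} \<inter> g -` {0..}"
  have "closed S"
    unfolding S_def using cont by (rule continuous_closed_preimage) auto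
  moreover have "T \<in> S"
    using assms by (simp add: S_def)
  ultimately have "Inf S \<in> S"
    by (intro closed_contains_Inf bdd_belowI[of _ 0]) (auto simp: S_def)
  define t where "t = Inf S"
  have t: "0 \<le> t" "t \<le> T" "0 \<le> g t"
    using \<open>Inf S \<in> S\<close> by (auto simp: S_def t_def)
  have before: "g s < 0" if "s \<in> {0..<t}" for s
  proof (rule ccontr)
    assume "\<not> g s < 0"
    then have "s \<in> S" using that t by (auto simp: S_def)
    then have "t \<le> s"
      unfolding t_def by (rule cInf_lower) (auto simp: S_def intro: bdd_belowI[of _ 0])
    with that show False by simp
  qed
  obtain s where s: "0 \<le> s" "s \<le> t" "g s = 0"
    using IVT'[of g 0 0 t] neg t continuous_on_subset[OF cont] by fastforce
  with before have "s = t"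
    by fastforce
  with s neg have "0 < t"
    by (cases "t = 0") auto
  with s t before \<open>s = t\<close> show thesis
    using that by blast
qed

lemma has_real_derivative_nonneg_at_first_zero:
  fixes h :: "real \<Rightarrow> real"
  assumes der: "(h has_real_derivative D) (at t within {0..t})" and "0 < t"
    and neg: "\<And>s. s \<in> {0..<t} \<Longrightarrow> h s < 0" and "h t = 0"
  shows "0 \<le> D"
proof (rule ccontr)
  assume "\<not> 0 \<le> D"
  then obtain d where "0 < d" and dec: "\<And>e. 0 < e \<Longrightarrow> t - e \<in> {0..t} \<Longrightarrow> e < d \<Longrightarrow> h t < h (t - e)"
    using has_real_derivative_neg_dec_left[OF der] by force
  define e where "e = min (d / 2) t"
  have "0 < e" "e < d" "e \<le> t"
    using \<open>0 < d\<close> \<open>0 < t\<close> by (auto simp: e_def)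
  then have "h t < h (t - e)"
    by (intro dec) auto
  moreover have "h (t - e) < 0"
    using \<open>0 < e\<close> \<open>e \<le> t\<close> by (intro neg) auto
  ultimately show False
    using \<open>h t = 0\<close> by simp
qed

text \<open>The solution of \<open>r' = -(k/2) r\<^sup>3\<close>, \<open>r(0) = A\<close>.\<close>
definition decay_radius :: "real \<Rightarrow> real \<Rightarrow> real \<Rightarrow> real" where
  "decay_radius k A t = A / sqrt (1 + k * A\<^sup>2 * t)"

lemma decay_radius_0 [simp]: "decay_radius k A 0 = A"
  by (simp add: decay_radius_def)

lemma decay_radius_pos: "0 < A \<Longrightarrow> 0 \<le> k \<Longrightarrow> 0 \<le> t \<Longrightarrow> 0 < decay_radius k A t"
  by (simp add: decay_radius_def add_pos_nonneg)

lemma decay_radius_le: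
  assumes "0 \<le> A" "0 \<le> k" "0 \<le> t"
  shows "decay_radius k A t \<le> A"
proof -
  have "1 \<le> sqrt (1 + k * A\<^sup>2 * t)"
    using assms by simp
  then show ?thesis
    using divide_left_mono[of 1 _ A] assms by (simp add: decay_radius_def)
qed

lemma decay_radius_tendsto_0:
  assumes "0 < k"
  shows "(decay_radius k A \<longlongrightarrow> 0) at_top"
proof (cases "A = 0")
  case False
  have "((\<lambda>t. A / sqrt (1 + c * t)) \<longlongrightarrow> 0) at_top" if "0 < c" for c
    using that by real_asymp
  moreover have "0 < k * A\<^sup>2"
    using assms False by simp
  ultimately show ?thesis
    unfolding decay_radius_def[abs_def] by blast
qed (simp add: decay_radius_def[abs_def])

lemma decay_radius_has_derivative:
  assumes "0 \<le> k" "0 \<le> t"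
  shows "(decay_radius k A has_real_derivative - (k / 2) * decay_radius k A t ^ 3) (at t)"
proof -
  define u where "u = 1 + k * A\<^sup>2 * t"
  have "0 < u"
    using assms by (simp add: u_def add_pos_nonneg)
  have der: "((\<lambda>t. A / sqrt (1 + k * A\<^sup>2 * t)) has_real_derivative
      - (A * (inverse (sqrt u) * (k * A\<^sup>2)) / (2 * u))) (at t)"
    using \<open>0 < u\<close> unfolding u_def by (auto intro!: derivative_eq_intros)
  have "u = sqrt u ^ 2"
    using \<open>0 < u\<close> by simp
  then have "- (A * (inverse (sqrt u) * (k * A\<^sup>2)) / (2 * u)) = - (k / 2) * (A / sqrt u) ^ 3"
    using \<open>0 < u\<close> by (simp add: field_simps power3_eq_cube power2_eq_square)
  with der show ?thesis
    by (simp only: decay_radius_def[abs_def] u_def)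
qed

lemma infnorm_attained_cart: "\<exists>i. \<bar>x $ i\<bar> = infnorm (x :: real^'n)"
proof -
  have "infnorm x = Max (range (\<lambda>i. \<bar>x $ i\<bar>))"
    unfolding infnorm_cart by (simp add: cSup_eq_Max full_SetCompr_eq)
  moreover have "Max (range (\<lambda>i. \<bar>x $ i\<bar>)) \<in> range (\<lambda>i. \<bar>x $ i\<bar>)"
    by (rule Max_in) auto
  ultimately show ?thesis
    by (metis (no_types, lifting) imageE)
qed

definition inward_on_cubes :: "real \<Rightarrow> real \<Rightarrow> (real^'n \<Rightarrow> real^'n) \<Rightarrow> bool" where
  "inward_on_cubes k R H \<longleftrightarrow>
     (\<forall>z i. infnorm z \<le> R \<longrightarrow> \<bar>z $ i\<bar> = infnorm z \<longrightarrow> sgn (z $ i) * H z $ i \<le> - k * infnorm z ^ 3)"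

lemma inward_on_cubesD:
  "inward_on_cubes k R H \<Longrightarrow> infnorm z \<le> R \<Longrightarrow> \<bar>z $ i\<bar> = infnorm z \<Longrightarrow>
    sgn (z $ i) * H z $ i \<le> - k * infnorm z ^ 3"
  by (simp add: inward_on_cubes_def)

lemma inward_on_cubes_cong:
  "inward_on_cubes k R H \<Longrightarrow> (\<And>z. infnorm z \<le> R \<Longrightarrow> H' z = H z) \<Longrightarrow> inward_on_cubes k R H'"
  by (simp add: inward_on_cubes_def)

lemma has_real_derivative_vec_nth:
  "(x has_vector_derivative v) F \<Longrightarrow> ((\<lambda>t. x t $ i) has_real_derivative v $ i) F"
  using bounded_linear.has_vector_derivative[OF bounded_linear_vec_nth]
  by (simp add: has_real_derivative_iff_has_vector_derivative)

text \<open>At the first time \<open>t\<close> where \<open>\<parallel>x\<parallel>\<^sub>\<infinity>\<close> reaches the radius, a maximal component would have to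
  grow at least as fast as the radius, whereas the field pushes it strictly faster inwards.\<close>
lemma infnorm_less_decay_radius:
  fixes H :: "real^'n \<Rightarrow> real^'n" and x :: "real \<Rightarrow> real^'n"
  assumes inward: "inward_on_cubes k R H" and "0 < k" "A \<le> R"
    and init: "infnorm (x 0) < A" and sol: "solves_on H x {0..<b}" and "T \<in> {0..<b}"
  shows "infnorm (x T) < decay_radius k A T"
proof (rule ccontr)
  let ?r = "decay_radius k A"
  assume contra: "\<not> ?thesis"
  have "0 < A"
    using init infnorm_pos_le[of "x 0"] by linarith
  have der: "(x has_vector_derivative H (x t)) (at t within {0..<b})" if "t \<in> {0..<b}" for t
    using sol that by (simp add: solves_on_def)
  have "continuous_on {0..T} x"
    using solves_on_continuous_on[OF sol]
    by (rule continuous_on_subset) (use \<open>T \<in> {0..<b}\<close> in auto)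
  moreover have "continuous_on {0..T} ?r"
    using \<open>0 < k\<close>
    by (intro continuous_at_imp_continuous_on ballI DERIV_isCont[OF decay_radius_has_derivative])
      auto
  ultimately have "continuous_on {0..T} (\<lambda>t. infnorm (x t) - ?r t)"
    by (intro continuous_intros)
  then obtain t where t: "0 < t" "t \<le> T" "infnorm (x t) - ?r t = 0"
    and before: "\<And>s. s \<in> {0..<t} \<Longrightarrow> infnorm (x s) - ?r s < 0"
    by (rule first_zero_crossing) (use contra init \<open>T \<in> {0..<b}\<close> in auto)
  obtain i where i: "\<bar>x t $ i\<bar> = infnorm (x t)"
    using infnorm_attained_cart by blast
  define B where "B = ?r t"
  have "0 < B"
    using \<open>0 < A\<close> \<open>0 < k\<close> t by (simp add: B_def decay_radius_pos)
  have "B \<le> R"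
    using decay_radius_le[of A k t] \<open>0 < A\<close> \<open>0 < k\<close> t \<open>A \<le> R\<close> by (simp add: B_def)
  define \<sigma> where "\<sigma> = sgn (x t $ i)"
  have "0 \<le> \<sigma> * H (x t) $ i - - (k / 2) * B ^ 3"
  proof (rule has_real_derivative_nonneg_at_first_zero)
    have "t \<in> {0..<b}" "{0..t} \<subseteq> {0..<b}"
      using t \<open>T \<in> {0..<b}\<close> by auto
    then have "((\<lambda>s. x s $ i) has_real_derivative H (x t) $ i) (at t within {0..t})"
      by (intro has_real_derivative_vec_nth has_vector_derivative_within_subset[OF der])
    moreover have "(?r has_real_derivative - (k / 2) * B ^ 3) (at t within {0..t})"
      using decay_radius_has_derivative[of k t A] \<open>0 < k\<close> t
      by (simp add: B_def has_field_derivative_at_within)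
    ultimately show "((\<lambda>s. \<sigma> * x s $ i - ?r s)
        has_real_derivative \<sigma> * H (x t) $ i - - (k / 2) * B ^ 3) (at t within {0..t})"
      by (intro DERIV_diff DERIV_cmult)
    show "\<sigma> * x s $ i - ?r s < 0" if "s \<in> {0..<t}" for s
      using before[OF that] component_le_infnorm_cart[of "x s" i] by (auto simp: \<sigma>_def sgn_if)
    show "\<sigma> * x t $ i - ?r t = 0"
      using i t by (auto simp: \<sigma>_def sgn_if split: if_splits)
  qed fact
  moreover have "\<sigma> * H (x t) $ i \<le> - k * B ^ 3"
    using inward_on_cubesD[OF inward, of "x t" i] \<open>B \<le> R\<close> i t by (simp add: \<sigma>_def B_def)
  moreover have "0 < k * B ^ 3"
    using \<open>0 < k\<close> \<open>0 < B\<close> by simp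
  ultimately show False
    by linarith
qed

section \<open>Stability of fields pointing into cubes\<close>

lemma lipschitz_on_cart_components:
  fixes f :: "'a::metric_space \<Rightarrow> real^'n"
  assumes lip: "\<And>i. (L i)-lipschitz_on S (\<lambda>z. f z $ i)"
  shows "(\<Sum>i\<in>UNIV. L i)-lipschitz_on S f"
proof (rule lipschitz_onI)
  fix u v assume "u \<in> S" "v \<in> S"
  have "dist (f u) (f v) \<le> (\<Sum>i\<in>UNIV. \<bar>f u $ i - f v $ i\<bar>)"
    using norm_le_l1_cart[of "f u - f v"] by (simp add: dist_norm)
  also have "\<dots> \<le> (\<Sum>i\<in>UNIV. L i * dist u v)"
    using lipschitz_onD[OF lip \<open>u \<in> S\<close> \<open>v \<in> S\<close>] by (intro sum_mono) (simp add: dist_real_def)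
  finally show "dist (f u) (f v) \<le> (\<Sum>i\<in>UNIV. L i) * dist u v"
    by (simp add: sum_distrib_right)
qed (use lipschitz_on_nonneg[OF lip] in \<open>simp add: sum_nonneg\<close>)

lemma closed_infnorm_le: "closed {z. infnorm z \<le> R}"
  by (intro closed_Collect_le continuous_intros)

lemma convex_infnorm_le: "convex {z. infnorm z \<le> R}"
proof (rule convexI)
  fix x y :: 'a and u v :: real
  assume "x \<in> {z. infnorm z \<le> R}" "y \<in> {z. infnorm z \<le> R}" "0 \<le> u" "0 \<le> v" "u + v = 1"
  then have "infnorm (u *\<^sub>R x + v *\<^sub>R y) \<le> u * R + v * R"
    using infnorm_triangle[of "u *\<^sub>R x" "v *\<^sub>R y"] mult_left_mono[of "infnorm x" R u]
      mult_left_mono[of "infnorm y" R v]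
    by (simp add: infnorm_mul)
  then show "u *\<^sub>R x + v *\<^sub>R y \<in> {z. infnorm z \<le> R}"
    using \<open>u + v = 1\<close> by (simp add: distrib_right[symmetric])
qed

lemma compact_infnorm_le: "compact {z::'a::euclidean_space. infnorm z \<le> R}"
proof -
  have "norm z \<le> sqrt DIM('a) * R" if "infnorm z \<le> R" for z :: 'a
    using order_trans[OF norm_le_infnorm mult_left_mono[OF that]] by simp
  then have "bounded {z::'a. infnorm z \<le> R}"
    unfolding bounded_iff by blast
  then show ?thesis
    using closed_infnorm_le by (simp add: compact_eq_bounded_closed)
qed

lemma bounded_lipschitz_field_retraction:
  fixes F :: "'a::euclidean_space \<Rightarrow> 'a"
  assumes "compact K" "convex K" "K \<noteq> {}" and lip: "L-lipschitz_on K F"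
  shows "\<exists>M. bounded_lipschitz_field (\<lambda>z. F (closest_point K z)) M L"
proof -
  have retract: "closest_point K z \<in> K" for z
    using compact_imp_closed[OF \<open>compact K\<close>] \<open>K \<noteq> {}\<close> by (rule closest_point_in_set)
  have "1-lipschitz_on UNIV (closest_point K)"
    using closest_point_lipschitz[OF \<open>convex K\<close> compact_imp_closed[OF \<open>compact K\<close>] \<open>K \<noteq> {}\<close>]
    by (intro lipschitz_onI) auto
  moreover have "L-lipschitz_on (closest_point K ` UNIV) F"
    by (rule lipschitz_on_subset[OF lip]) (use retract in auto)
  ultimately have "(L * 1)-lipschitz_on UNIV (\<lambda>z. F (closest_point K z))"
    by (rule lipschitz_on_compose2)
  moreover obtain M where "\<forall>v\<in>F ` K. norm v \<le> M"
    using compact_continuous_image[OF lipschitz_on_continuous_on[OF lip] \<open>compact K\<close>]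
      compact_imp_bounded bounded_iff by metis
  then have "norm (F (closest_point K z)) \<le> M" for z
    using retract[of z] by simp
  ultimately have "bounded_lipschitz_field (\<lambda>z. F (closest_point K z)) M L"
    by unfold_locales simp_all
  then show ?thesis
    by blast
qed

text \<open>The barrier keeps the solution of the retracted field inside the cube, where it solves the
  original equation.\<close>
lemma global_solution_if_inward_on_cubes:
  fixes F :: "real^'n \<Rightarrow> real^'n"
  assumes inward: "inward_on_cubes k R F" and "0 < k"
    and lip: "L-lipschitz_on {z. infnorm z \<le> R} F" and y: "infnorm y < R"
  obtains x where "x 0 = y" "solves_on F x {0..}"
proof -
  define K where "K = {z::real^'n. infnorm z \<le> R}"
  define G where "G z = F (closest_point K z)" for z
  have "y \<in> K"
    using y by (simp add: K_def)
  moreover have "compact K" "convex K"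
    by (simp_all add: K_def compact_infnorm_le convex_infnorm_le)
  ultimately obtain M where "bounded_lipschitz_field G M L"
    using bounded_lipschitz_field_retraction[of K L F] lip unfolding G_def K_def by blast
  then interpret bounded_lipschitz_field G M L .
  have G_eq: "G z = F z" if "infnorm z \<le> R" for z
    using that by (simp add: G_def K_def closest_point_self)
  define x where "x = picard_limit G y"
  have inside: "infnorm (x t) \<le> R" if "0 \<le> t" for t
  proof -
    have "solves_on G x {0..<t + 1}"
      unfolding x_def using picard_limit_solves by (rule solves_on_subset) auto
    then have "infnorm (x t) < decay_radius k R t"
      using infnorm_less_decay_radius[OF inward_on_cubes_cong[OF inward G_eq] \<open>0 < k\<close>, of R x]
        y that by (simp add: x_def picard_limit_0)
    also have "\<dots> \<le> R"
      using decay_radius_le[of R k t] y infnorm_pos_le[of y] \<open>0 < k\<close> that by simp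
    finally show ?thesis
      by simp
  qed
  have "solves_on F x {0..}"
    using picard_limit_solves[of y] inside G_eq by (auto simp: solves_on_def x_def)
  moreover have "x 0 = y"
    by (simp add: x_def picard_limit_0)
  ultimately show thesis
    using that by blast
qed

lemma lyapunov_stable_if_inward_on_cubes:
  fixes F :: "real^'n \<Rightarrow> real^'n"
  assumes inward: "inward_on_cubes k R F" and "0 < k" "0 < R"
    and lip: "L-lipschitz_on {z. infnorm z \<le> R} F"
  shows "lyapunov_stable F 0"
  unfolding lyapunov_stable_def
proof (intro allI impI)
  fix e :: real assume "0 < e"
  define D where "D = sqrt (real DIM(real^'n))"
  define d where "d = min R (e / D)"
  have "0 < D"
    by (simp add: D_def)
  have norm_le: "norm z \<le> D * infnorm z" for z :: "real^'n"
    unfolding D_def by (rule norm_le_infnorm)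
  from \<open>0 < D\<close> have "0 < d" "d \<le> R" "d \<le> e / D"
    using \<open>0 < e\<close> \<open>0 < R\<close> by (auto simp: d_def)
  then have "D * d \<le> e"
    using mult_left_mono[of d "e / D" D] \<open>0 < D\<close> by simp
  show "\<exists>d>0. \<forall>y. norm (y - 0) < d \<longrightarrow> (\<exists>x. x 0 = y \<and> solves_on F x {0..}) \<and>
      (\<forall>x b. x 0 = y \<and> solves_on F x {0..<b} \<longrightarrow> (\<forall>t\<in>{0..<b}. norm (x t - 0) < e))"
  proof (intro exI[of _ d] conjI allI impI ballI \<open>0 < d\<close>)
    fix y :: "real^'n" assume "norm (y - 0) < d"
    then have y: "infnorm y < d"
      using infnorm_le_norm[of y] by simp
    then show "\<exists>x. x 0 = y \<and> solves_on F x {0..}"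
      using global_solution_if_inward_on_cubes[OF inward \<open>0 < k\<close> lip, of y] \<open>d \<le> R\<close> by force
    fix x b t assume x: "x 0 = y \<and> solves_on F x {0..<b}" and t: "t \<in> {0..<b}"
    have "infnorm (x t) < decay_radius k d t"
      using infnorm_less_decay_radius[OF inward \<open>0 < k\<close> \<open>d \<le> R\<close>, of x b t] x y t by simp
    also have "\<dots> \<le> d"
      using decay_radius_le[of d k t] \<open>0 < d\<close> \<open>0 < k\<close> t by simp
    finally have "D * infnorm (x t) < D * d"
      using \<open>0 < D\<close> by simp
    with norm_le[of "x t"] \<open>D * d \<le> e\<close> show "norm (x t - 0) < e"
      by simp
  qed
qed

lemma attractive_if_inward_on_cubes:
  fixes F :: "real^'n \<Rightarrow> real^'n"
  assumes inward: "inward_on_cubes k R F" and "0 < k" "0 < R"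
  shows "attractive F 0"
  unfolding attractive_def
proof (intro exI[of _ R] conjI allI impI \<open>0 < R\<close>)
  fix x assume x: "solves_on F x {0..} \<and> norm (x 0 - 0) < R"
  define D where "D = sqrt (real DIM(real^'n))"
  have norm_le: "norm z \<le> D * infnorm z" for z :: "real^'n"
    unfolding D_def by (rule norm_le_infnorm)
  have bound: "norm (x t) \<le> D * decay_radius k R t" if "0 \<le> t" for t
  proof -
    have "solves_on F x {0..<t + 1}"
      using x by (auto intro: solves_on_subset)
    then have "infnorm (x t) \<le> decay_radius k R t"
      using infnorm_less_decay_radius[OF inward \<open>0 < k\<close> order_refl] x infnorm_le_norm[of "x 0"] that
      by (simp add: less_imp_le)
    then have "D * infnorm (x t) \<le> D * decay_radius k R t"
      by (simp add: D_def mult_left_mono)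
    with norm_le[of "x t"] show ?thesis
      by linarith
  qed
  have "\<forall>\<^sub>F t in at_top. norm (x t) \<le> D * decay_radius k R t"
    using eventually_ge_at_top[of "0::real"] by (rule eventually_mono) (rule bound)
  moreover have "((\<lambda>t. D * decay_radius k R t) \<longlongrightarrow> 0) at_top"
    using decay_radius_tendsto_0[OF \<open>0 < k\<close>] by (rule tendsto_mult_right_zero)
  ultimately show "(x \<longlongrightarrow> 0) at_top"
    by (rule Lim_null_comparison)
qed

lemma locally_asymptotically_stable_if_inward_on_cubes:
  fixes F :: "real^'n \<Rightarrow> real^'n"
  assumes "F 0 = 0" and "inward_on_cubes k R F" "0 < k" "0 < R"
    and "L-lipschitz_on {z. infnorm z \<le> R} F"
  shows "locally_asymptotically_stable F 0"
  using assms lyapunov_stable_if_inward_on_cubes[of k R F L] attractive_if_inward_on_cubes[of k R F]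
  by (simp add: locally_asymptotically_stable_def)

section \<open>The network\<close>

lemma node_field_inward_on_cubes:
  fixes a :: "real^'n" and w :: "real^'n^'n"
  assumes a: "\<forall>i. a $ i \<le> - c" and "0 \<le> c" and w: "\<forall>i j. 0 \<le> w $ i $ j" and "0 \<le> \<epsilon>"
  shows "inward_on_cubes (c / 2) (1 / 2) (node_field a w \<epsilon>)"
  unfolding inward_on_cubes_def
proof (intro allI impI)
  fix z :: "real^'n" and i
  assume "infnorm z \<le> 1 / 2" and zi: "\<bar>z $ i\<bar> = infnorm z"
  define r where "r = infnorm z"
  define \<sigma> where "\<sigma> = sgn (z $ i)"
  have "0 \<le> r" "z $ i \<le> 1 / 2"
    using \<open>infnorm z \<le> 1 / 2\<close> zi by (auto simp: r_def infnorm_pos_le)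
  have "\<sigma> * z $ i = r"
    using zi by (auto simp: \<sigma>_def r_def sgn_if)
  moreover have "(z $ i)\<^sup>2 = r\<^sup>2"
    unfolding r_def zi[symmetric] by simp
  ultimately have "\<sigma> * (z $ i) ^ 3 = r ^ 3"
    by (metis power2_eq_square power3_eq_cube mult.assoc)
  then have "\<sigma> * (a $ i * (z $ i) ^ 3 * (1 - z $ i)) = a $ i * (r ^ 3 * (1 - z $ i))"
    by (metis mult.assoc mult.left_commute)
  also have "\<dots> \<le> - c * (r ^ 3 * (1 - z $ i))"
    using a \<open>0 \<le> r\<close> \<open>z $ i \<le> 1 / 2\<close> by (intro mult_right_mono) auto
  also have "\<dots> \<le> - (c / 2) * r ^ 3"
    using mult_left_mono[OF \<open>z $ i \<le> 1 / 2\<close>, of "c * r ^ 3"] \<open>0 \<le> c\<close> \<open>0 \<le> r\<close>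
    by (simp add: algebra_simps)
  finally have cubic: "\<sigma> * (a $ i * (z $ i) ^ 3 * (1 - z $ i)) \<le> - (c / 2) * r ^ 3" .
  have "\<sigma> * (w $ i $ j * (z $ j - z $ i)) \<le> 0" for j
  proof -
    have "\<sigma> * z $ j \<le> r"
      using component_le_infnorm_cart[of z j] by (auto simp: \<sigma>_def r_def sgn_if)
    then have "w $ i $ j * (\<sigma> * z $ j - r) \<le> 0"
      using w by (simp add: mult_nonneg_nonpos)
    moreover have "\<sigma> * (w $ i $ j * (z $ j - z $ i)) = w $ i $ j * (\<sigma> * z $ j - r)"
      using \<open>\<sigma> * z $ i = r\<close> by (simp add: algebra_simps)
    ultimately show ?thesis
      by linarith
  qed
  then have coupling: "\<sigma> * (\<epsilon> * (\<Sum>j\<in>UNIV. w $ i $ j * (z $ j - z $ i))) \<le> 0"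
    using \<open>0 \<le> \<epsilon>\<close> by (simp add: sum_distrib_left mult.left_commute sum_nonpos mult_nonneg_nonpos)
  show "sgn (z $ i) * node_field a w \<epsilon> z $ i \<le> - (c / 2) * infnorm z ^ 3"
    using cubic coupling by (simp add: node_field_def \<sigma>_def r_def distrib_left)
qed

lemma lipschitz_on_node_nonlinearity: "2-lipschitz_on {-1/2..1/2} (\<lambda>u::real. u ^ 3 * (1 - u))"
proof (rule lipschitz_onI)
  fix u v :: real assume "u \<in> {-1/2..1/2}" "v \<in> {-1/2..1/2}"
  then have u: "\<bar>u\<bar> \<le> 1/2" and v: "\<bar>v\<bar> \<le> 1/2"
    by auto
  have "u\<^sup>2 \<le> 1/4" "v\<^sup>2 \<le> 1/4"
    using power_mono[OF u, of 2] power_mono[OF v, of 2] by (simp_all add: power_divide)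
  moreover have "\<bar>u\<bar> * \<bar>v\<bar> \<le> 1/2 * (1/2)"
    using u v by (intro mult_mono) auto
  then have "\<bar>u * v\<bar> \<le> 1/4"
    by (simp add: abs_mult)
  moreover have "\<bar>(u + v) * (u\<^sup>2 + v\<^sup>2)\<bar> \<le> 1 * (1/2)"
    unfolding abs_mult using u v \<open>u\<^sup>2 \<le> 1/4\<close> \<open>v\<^sup>2 \<le> 1/4\<close> by (intro mult_mono) auto
  ultimately have q: "\<bar>(u\<^sup>2 + u * v + v\<^sup>2) - (u + v) * (u\<^sup>2 + v\<^sup>2)\<bar> \<le> 2"
    using zero_le_power2[of u] zero_le_power2[of v] unfolding abs_le_iff by linarith
  have "u ^ 3 * (1 - u) - v ^ 3 * (1 - v) = (u - v) * ((u\<^sup>2 + u * v + v\<^sup>2) - (u + v) * (u\<^sup>2 + v\<^sup>2))"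
    by (simp add: algebra_simps power2_eq_square power3_eq_cube)
  then have "dist (u ^ 3 * (1 - u)) (v ^ 3 * (1 - v))
      = \<bar>u - v\<bar> * \<bar>(u\<^sup>2 + u * v + v\<^sup>2) - (u + v) * (u\<^sup>2 + v\<^sup>2)\<bar>"
    by (simp add: dist_real_def abs_mult)
  also have "\<dots> \<le> 2 * dist u v"
    using mult_left_mono[OF q abs_ge_zero[of "u - v"]] by (simp add: dist_real_def mult.commute)
  finally show "dist (u ^ 3 * (1 - u)) (v ^ 3 * (1 - v)) \<le> 2 * dist u v" .
qed simp

lemma node_field_lipschitz_on_cube:
  fixes a :: "real^'n" and w :: "real^'n^'n"
  obtains L where "L-lipschitz_on {z. infnorm z \<le> 1/2} (node_field a w \<epsilon>)"
proof -
  define K where "K = {z::real^'n. infnorm z \<le> 1/2}"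
  define P where "P z = (\<chi> i. a $ i * ((z $ i) ^ 3 * (1 - z $ i)))" for z :: "real^'n"
  define C where "C z = (\<chi> i. \<Sum>j\<in>UNIV. w $ i $ j * (z $ j - z $ i))" for z :: "real^'n"
  have split: "node_field a w \<epsilon> = (\<lambda>z. P z + \<epsilon> *\<^sub>R C z)"
    by (simp add: fun_eq_iff vec_eq_iff node_field_def P_def C_def mult.assoc)
  have "(\<Sum>i\<in>UNIV. \<bar>a $ i\<bar> * (2 * 1))-lipschitz_on K P"
  proof (rule lipschitz_on_cart_components)
    fix i
    have range: "z $ i \<in> {-1/2..1/2}" if "z \<in> K" for z
      using component_le_infnorm_cart[of z i] that by (auto simp: K_def abs_le_iff)
    have "1-lipschitz_on K (\<lambda>z. z $ i)"
      by (rule lipschitz_onI) (auto simp: dist_vec_nth_le)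
    moreover have "2-lipschitz_on ((\<lambda>z. z $ i) ` K) (\<lambda>u. u ^ 3 * (1 - u))"
      using range by (intro lipschitz_on_subset[OF lipschitz_on_node_nonlinearity]) auto
    ultimately have "(2 * 1)-lipschitz_on K (\<lambda>z. (z $ i) ^ 3 * (1 - z $ i))"
      by (rule lipschitz_on_compose2)
    then show "(\<bar>a $ i\<bar> * (2 * 1))-lipschitz_on K (\<lambda>z. P z $ i)"
      unfolding P_def by (simp add: lipschitz_on_cmult_real)
  qed
  moreover obtain B where "B-lipschitz_on K C"
  proof -
    have "linear C"
      by (rule linearI)
        (simp_all add: C_def vec_eq_iff sum.distrib[symmetric] sum_distrib_left algebra_simps)
    then show thesis
      using that by (auto simp: linear_conv_bounded_linear elim: bounded_linear.lipschitz_boundE)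
  qed
  ultimately have "((\<Sum>i\<in>UNIV. \<bar>a $ i\<bar> * (2 * 1)) + \<bar>\<epsilon>\<bar> * B)-lipschitz_on K (node_field a w \<epsilon>)"
    unfolding split by (intro lipschitz_on_add lipschitz_on_cmult)
  then show thesis
    using that by (simp add: K_def)
qed

theorem proposition3:
  fixes a :: "real^'n" and w :: "real^'n^'n"
  assumes "\<forall>i. a$i \<noteq> 0"
    and "\<forall>i. w$i$i = 0"
    and "\<forall>i. a$i < 0"
    and "\<forall>i j. w$i$j \<ge> 0"
    and "strongly_connected w"
  shows "\<exists>\<epsilon>0>0. \<forall>\<epsilon>. 0 < \<epsilon> \<and> \<epsilon> < \<epsilon>0 \<longrightarrow>
           locally_asymptotically_stable (node_field a w \<epsilon>) 0"
proof -
  define c where "c = Min (range (\<lambda>i. - a $ i))"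
  have "0 < c"
    unfolding c_def using assms(3) by (subst Min_gr_iff) auto
  have "c \<le> - a $ i" for i
    unfolding c_def by (rule Min_le) auto
  then have "\<forall>i. a $ i \<le> - c"
    by (simp add: le_minus_iff)
  have "locally_asymptotically_stable (node_field a w \<epsilon>) 0" if "0 \<le> \<epsilon>" for \<epsilon>
  proof -
    obtain L where lip: "L-lipschitz_on {z. infnorm z \<le> 1/2} (node_field a w \<epsilon>)"
      by (rule node_field_lipschitz_on_cube)
    have "node_field a w \<epsilon> 0 = 0"
      by (simp add: node_field_def vec_eq_iff)
    moreover have "inward_on_cubes (c / 2) (1 / 2) (node_field a w \<epsilon>)"
      using \<open>\<forall>i. a $ i \<le> - c\<close> \<open>0 < c\<close> assms(4) that by (intro node_field_inward_on_cubes) auto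
    ultimately show ?thesis
      using locally_asymptotically_stable_if_inward_on_cubes[OF _ _ _ _ lip] \<open>0 < c\<close> by simp
  qed
  then show ?thesis
    by (intro exI[of _ 1]) auto
qed

end
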